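(* (a) Assume $\lambda$, $w_1(r)$, $w_2(r)$ are nonnegative and $0\le\alpha\le\frac12[b\lambda+w_1(r)+w_2(r)]$. Then $\widetilde{\mathrm{ET}}_\lambda^\alpha$ is a negative definite kernel on ${\mathcal M}({\mathcal T})$. (b) Assume $\lambda$, $w_1(r)$, $w_2(r)$ are nonnegative and $0\le\alpha<\frac{b\lambda}{2}+\min\{w_1(r),w_2(r)\}$, and let $d_\alpha(\mu,\nu):=\widetilde{\mathrm{ET}}_\lambda^\alpha(\mu,\nu)+\frac{b\lambda}{2}[\mu({\mathcal T})+\nu({\mathcal T})]$. Then $d_\alpha$ is a negative definite kernel on ${\mathcal M}({\mathcal T})$.
   Context: Let ${\mathcal T}$ be a tree rooted at node $r$ with nonnegative edge lengths, identified with the set of its nodes and all points on its edges; $[x,y]$ is the unique path between $x,y$, $d_{\mathcal T}(x,y)$ its length, and $\omega$ the Borel length measure with $\omega([x,y])=d_{\mathcal T}(x,y)$. ${\mathcal M}({\mathcal T})$ is the set of nonnegative Borel measures on ${\mathcal T}$ with finite mass; $L^\infty({\mathcal T})$ is the space of Borel functions bounded $\omega$-a.e. with $\omega$-essential-sup norm. Fix $b\ge0$ and weights $w_1,w_2:{\mathcal T}\to[0,\infty)$. For $0\le\alpha\le\frac12[b\lambda+w_1(r)+w_2(r)]$, $\mathbb{L}_\alpha$ is the set of functions $f(x)=s+\int_{[r,x]}g\,d\omega$ with $s\in[-w_2(r)-\frac{b\lambda}{2}+\alpha,\ w_1(r)+\frac{b\lambda}{2}-\alpha]$ and $\|g\|_{L^\infty({\mathcal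 T})}\le b$, and $\widetilde{\mathrm{ET}}_\lambda^\alpha(\mu,\nu):=\sup\{\int_{\mathcal T} f\,d(\mu-\nu): f\in\mathbb{L}_\alpha\}-\frac{b\lambda}{2}[\mu({\mathcal T})+\nu({\mathcal T})]$. A kernel $k:\mathcal X\times\mathcal X\to\mathbb{R}$ is negative definite if for all $n\ge2$, all $x_1,\dots,x_n\in\mathcal X$ and all $c_1,\dots,c_n\in\mathbb{R}$ with $\sum_i c_i=0$, one has $\sum_{i,j}c_ic_jk(x_i,x_j)\le0$. *)

theory Defs
  imports "HOL-Analysis.Analysis"
begin

text \<open>A finite rooted metric tree: node set V, root r, parent map par (the edge of a
non-root node v joins v to par v), edge lengths len (len v = length of the edge
above v).  Points of the tree: the root point (r,0), and for every non-root node v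
the points (v,t) with 0 < t \<le> len v on the edge above v (measured from par v);
the node v itself is the point (v, len v).  If len v = 0 the edge is the single
point (v,0).\<close>

definition is_rooted_tree :: "'v set \<Rightarrow> 'v \<Rightarrow> ('v \<Rightarrow> 'v) \<Rightarrow> ('v \<Rightarrow> real) \<Rightarrow> bool" where
  "is_rooted_tree V r par len \<longleftrightarrow> finite V \<and> r \<in> V \<and> (\<forall>v\<in>V - {r}. par v \<in> V)
     \<and> (\<forall>v\<in>V. \<exists>n. (par ^^ n) v = r) \<and> (\<forall>v\<in>V. 0 \<le> len v)"

definition tree_pts :: "'v set \<Rightarrow> 'v \<Rightarrow> ('v \<Rightarrow> real) \<Rightarrow> ('v \<times> real) set" where
  "tree_pts V r len = insert (r, 0)
     {(v, t). v \<in> V - {r} \<and> ((0 < t \<and> t \<le> len v) \<or> t = len v)}"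

definition path_nodes :: "'v \<Rightarrow> ('v \<Rightarrow> 'v) \<Rightarrow> 'v \<Rightarrow> 'v set" where
  "path_nodes r par v = {(par ^^ k) v | k. k < (LEAST n. (par ^^ n) v = r)}"

definition root_path :: "'v set \<Rightarrow> 'v \<Rightarrow> ('v \<Rightarrow> 'v) \<Rightarrow> ('v \<Rightarrow> real) \<Rightarrow> 'v \<times> real \<Rightarrow> ('v \<times> real) set" where
  "root_path V r par len x = insert (r, 0)
     ({y \<in> tree_pts V r len. fst y \<in> path_nodes r par (fst x) \<and> fst y \<noteq> fst x}
      \<union> {y \<in> tree_pts V r len. fst y = fst x \<and> fst x \<noteq> r \<and> snd y \<le> snd x})"

definition tree_space :: "'v set \<Rightarrow> 'v \<Rightarrow> ('v \<Rightarrow> real) \<Rightarrow> ('v \<times> real) measure" where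
  "tree_space V r len = restrict_space (count_space V \<Otimes>\<^sub>M borel) (tree_pts V r len)"

definition length_measure :: "'v set \<Rightarrow> 'v \<Rightarrow> ('v \<Rightarrow> real) \<Rightarrow> ('v \<times> real) measure" where
  "length_measure V r len = measure_of (tree_pts V r len) (sets (tree_space V r len))
     (\<lambda>A. \<Sum>v\<in>V - {r}. emeasure lborel {t \<in> {0<..len v}. (v, t) \<in> A})"

definition tree_measures :: "'v set \<Rightarrow> 'v \<Rightarrow> ('v \<Rightarrow> real) \<Rightarrow> ('v \<times> real) measure set" where
  "tree_measures V r len = {\<mu>. sets \<mu> = sets (tree_space V r len) \<and> finite_measure \<mu>}"

definition L_alpha :: "'v set \<Rightarrow> 'v \<Rightarrow> ('v \<Rightarrow> 'v) \<Rightarrow> ('v \<Rightarrow> real) \<Rightarrow> real \<Rightarrow> real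
    \<Rightarrow> ('v \<times> real \<Rightarrow> real) \<Rightarrow> ('v \<times> real \<Rightarrow> real) \<Rightarrow> real \<Rightarrow> ('v \<times> real \<Rightarrow> real) set" where
  "L_alpha V r par len b lam w1 w2 \<alpha> =
     {f. \<exists>s g. - w2 (r, 0) - b * lam / 2 + \<alpha> \<le> s \<and> s \<le> w1 (r, 0) + b * lam / 2 - \<alpha>
          \<and> g \<in> borel_measurable (tree_space V r len)
          \<and> (AE y in length_measure V r len. \<bar>g y\<bar> \<le> b)
          \<and> (\<forall>x\<in>tree_pts V r len.
               f x = s + (LINT y:root_path V r par len x|length_measure V r len. g y))}"

definition ET_tilde :: "'v set \<Rightarrow> 'v \<Rightarrow> ('v \<Rightarrow> 'v) \<Rightarrow> ('v \<Rightarrow> real) \<Rightarrow> real \<Rightarrow> real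
    \<Rightarrow> ('v \<times> real \<Rightarrow> real) \<Rightarrow> ('v \<times> real \<Rightarrow> real) \<Rightarrow> real
    \<Rightarrow> ('v \<times> real) measure \<Rightarrow> ('v \<times> real) measure \<Rightarrow> real" where
  "ET_tilde V r par len b lam w1 w2 \<alpha> \<mu> \<nu> =
     (SUP f\<in>L_alpha V r par len b lam w1 w2 \<alpha>. (\<integral>x. f x \<partial>\<mu>) - (\<integral>x. f x \<partial>\<nu>))
     - b * lam / 2 * (measure \<mu> (tree_pts V r len) + measure \<nu> (tree_pts V r len))"

definition neg_def_kernel :: "'a set \<Rightarrow> ('a \<Rightarrow> 'a \<Rightarrow> real) \<Rightarrow> bool" where
  "neg_def_kernel X k \<longleftrightarrow> (\<forall>n::nat. \<forall>x c. 2 \<le> n \<and> (\<forall>i<n. x i \<in> X) \<and> (\<Sum>i<n. c i) = (0::real)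
      \<longrightarrow> (\<Sum>i<n. \<Sum>j<n. c i * c j * k (x i) (x j)) \<le> 0)"

end

theory Submission
  imports Defs
begin

(* Write H_mu(y) for the mu-mass of the subtree below y, i.e. of {x. y in [r,x]}.  By Fubini,
   f(x) = s + integral over [r,x] of g  satisfies
     integral f d(mu - nu) = s (mu(T) - nu(T)) + integral g (H_mu - H_nu) d omega,
   so the supremum over L_alpha is attained at the endpoint s of the admissible interval
   selected by the sign of mu(T) - nu(T) and at g = b sgn(H_mu - H_nu).  Up to terms
   a(mu) + e(nu), which vanish from every quadratic form whose coefficients sum to zero,
   ET_tilde is then a nonnegative combination of |mu(T) - nu(T)| and
   integral |H_mu - H_nu| d omega.  Both are negative definite, because |s - t| is the
   integral over u of |1[u < s] - 1[u < t]|, and for 0/1-valued e the quadratic form of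
   |e x - e y| equals -2 (sum c_i e(x_i))^2.  Part (b) adds one more term a(mu) + e(nu). *)

section \<open>Negative definite kernels\<close>

lemma neg_def_kernelI:
  fixes k :: "'a \<Rightarrow> 'a \<Rightarrow> real"
  assumes "\<And>(n::nat) x (c::nat \<Rightarrow> real). 2 \<le> n \<Longrightarrow> \<forall>i<n. x i \<in> X \<Longrightarrow> (\<Sum>i<n. c i) = 0
             \<Longrightarrow> (\<Sum>i<n. \<Sum>j<n. c i * c j * k (x i) (x j)) \<le> 0"
  shows "neg_def_kernel X k"
  using assms unfolding neg_def_kernel_def by blast

lemma neg_def_kernelD:
  fixes n :: nat and c :: "nat \<Rightarrow> real"
  assumes "neg_def_kernel X k" "2 \<le> n" "\<forall>i<n. x i \<in> X" "(\<Sum>i<n. c i) = 0"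
  shows "(\<Sum>i<n. \<Sum>j<n. c i * c j * k (x i) (x j)) \<le> 0"
  using assms unfolding neg_def_kernel_def by blast

lemma neg_def_kernel_cong:
  assumes k: "neg_def_kernel X k" and eq: "\<And>x y. x \<in> X \<Longrightarrow> y \<in> X \<Longrightarrow> k x y = k' x y"
  shows "neg_def_kernel X k'"
proof (rule neg_def_kernelI)
  fix n x and c :: "nat \<Rightarrow> real"
  assume n: "2 \<le> n" and x: "\<forall>i<n. x i \<in> X" and c: "(\<Sum>i<n. c i) = 0"
  have "(\<Sum>i<n. \<Sum>j<n. c i * c j * k' (x i) (x j)) = (\<Sum>i<n. \<Sum>j<n. c i * c j * k (x i) (x j))"
    using x eq by (intro sum.cong) auto
  also have "\<dots> \<le> 0" by (rule neg_def_kernelD[OF k n x c])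
  finally show "(\<Sum>i<n. \<Sum>j<n. c i * c j * k' (x i) (x j)) \<le> 0" .
qed

lemma neg_def_kernel_add:
  assumes "neg_def_kernel X k" "neg_def_kernel X k'"
  shows "neg_def_kernel X (\<lambda>x y. k x y + k' x y)"
  by (rule neg_def_kernelI)
    (simp add: distrib_left sum.distrib add_nonpos_nonpos neg_def_kernelD[OF assms(1)]
      neg_def_kernelD[OF assms(2)])

lemma neg_def_kernel_mult:
  assumes "0 \<le> a" "neg_def_kernel X k"
  shows "neg_def_kernel X (\<lambda>x y. a * k x y)"
proof (rule neg_def_kernelI)
  fix n x and c :: "nat \<Rightarrow> real"
  assume "2 \<le> n" "\<forall>i<n. x i \<in> X" "(\<Sum>i<n. c i) = 0"
  then have "a * (\<Sum>i<n. \<Sum>j<n. c i * c j * k (x i) (x j)) \<le> 0"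
    using assms by (simp add: mult_nonneg_nonpos neg_def_kernelD)
  then show "(\<Sum>i<n. \<Sum>j<n. c i * c j * (a * k (x i) (x j))) \<le> 0"
    by (simp add: sum_distrib_left mult.left_commute)
qed

lemma neg_def_kernel_separable: "neg_def_kernel X (\<lambda>x y. a x + e y)"
proof (rule neg_def_kernelI)
  fix n x and c :: "nat \<Rightarrow> real"
  assume c: "(\<Sum>i<n. c i) = 0"
  have split: "c i * c j * (a (x i) + e (x j)) = c i * a (x i) * c j + c i * (c j * e (x j))"
    for i j by (simp add: algebra_simps)
  have "(\<Sum>i<n. \<Sum>j<n. c i * c j * (a (x i) + e (x j)))
      = (\<Sum>i<n. c i * a (x i) * (\<Sum>j<n. c j)) + (\<Sum>i<n. c i * (\<Sum>j<n. c j * e (x j)))"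
    unfolding split sum.distrib sum_distrib_left ..
  also have "\<dots> = 0"
    using c by (simp add: sum_distrib_right[symmetric])
  finally show "(\<Sum>i<n. \<Sum>j<n. c i * c j * (a (x i) + e (x j))) \<le> 0" by simp
qed

lemma neg_def_kernel_uminus_mult: "neg_def_kernel X (\<lambda>x y. - (e x * e y))"
proof (rule neg_def_kernelI)
  fix n x and c :: "nat \<Rightarrow> real"
  have "(\<Sum>i<n. \<Sum>j<n. c i * c j * - (e (x i) * e (x j))) = - (\<Sum>i<n. c i * e (x i))\<^sup>2"
    by (simp add: power2_eq_square sum_distrib_left sum_distrib_right algebra_simps sum_negf)
  then show "(\<Sum>i<n. \<Sum>j<n. c i * c j * - (e (x i) * e (x j))) \<le> 0" by simp
qed

lemma neg_def_kernel_compose: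
  assumes "neg_def_kernel Y k" "f ` X \<subseteq> Y"
  shows "neg_def_kernel X (\<lambda>x y. k (f x) (f y))"
proof (rule neg_def_kernelI)
  fix n x and c :: "nat \<Rightarrow> real"
  assume "2 \<le> n" "\<forall>i<n. x i \<in> X" "(\<Sum>i<n. c i) = 0"
  then show "(\<Sum>i<n. \<Sum>j<n. c i * c j * k (f (x i)) (f (x j))) \<le> 0"
    using assms by (intro neg_def_kernelD[where x = "f \<circ> x", simplified]) auto
qed

lemma neg_def_kernel_integral:
  fixes F :: "'a \<Rightarrow> 'a \<Rightarrow> 'b \<Rightarrow> real"
  assumes nd: "\<And>t. t \<in> space M \<Longrightarrow> neg_def_kernel X (\<lambda>x y. F x y t)"
    and int: "\<And>x y. x \<in> X \<Longrightarrow> y \<in> X \<Longrightarrow> integrable M (F x y)"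
  shows "neg_def_kernel X (\<lambda>x y. \<integral>t. F x y t \<partial>M)"
proof (rule neg_def_kernelI)
  fix n x and c :: "nat \<Rightarrow> real"
  assume n: "2 \<le> n" and x: "\<forall>i<n. x i \<in> X" and c: "(\<Sum>i<n. c i) = 0"
  have int': "integrable M (F (x i) (x j))" if "i \<in> {..<n}" "j \<in> {..<n}" for i j
    using that x int by simp
  have "(\<Sum>i<n. \<Sum>j<n. c i * c j * (\<integral>t. F (x i) (x j) t \<partial>M))
      = (\<Sum>i<n. \<integral>t. (\<Sum>j<n. c i * c j * F (x i) (x j) t) \<partial>M)"
    by (rule sum.cong[OF refl], subst Bochner_Integration.integral_sum) (auto intro: int')
  also have "\<dots> = (\<integral>t. (\<Sum>i<n. \<Sum>j<n. c i * c j * F (x i) (x j) t) \<partial>M)"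
    by (rule Bochner_Integration.integral_sum[symmetric]) (auto intro!: integrable_sum int')
  also have "\<dots> \<le> 0"
  proof -
    have "0 \<le> (\<integral>t. - (\<Sum>i<n. \<Sum>j<n. c i * c j * F (x i) (x j) t) \<partial>M)"
      using neg_def_kernelD[OF nd n x c] by (intro Bochner_Integration.integral_nonneg) simp
    then show ?thesis by simp
  qed
  finally show "(\<Sum>i<n. \<Sum>j<n. c i * c j * (\<integral>t. F (x i) (x j) t \<partial>M)) \<le> 0" .
qed

lemma neg_def_kernel_abs_diff_01:
  fixes e :: "'a \<Rightarrow> real"
  assumes "\<And>x. x \<in> X \<Longrightarrow> e x = 0 \<or> e x = 1"
  shows "neg_def_kernel X (\<lambda>x y. \<bar>e x - e y\<bar>)"
proof (rule neg_def_kernel_cong)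
  show "neg_def_kernel X (\<lambda>x y. (e x + e y) + 2 * - (e x * e y))"
    by (intro neg_def_kernel_add neg_def_kernel_separable neg_def_kernel_mult
        neg_def_kernel_uminus_mult) simp
  show "(e x + e y) + 2 * - (e x * e y) = \<bar>e x - e y\<bar>" if "x \<in> X" "y \<in> X" for x y
    using assms[OF that(1)] assms[OF that(2)] by auto
qed

lemma neg_def_kernel_abs_diff: "neg_def_kernel UNIV (\<lambda>s t :: real. \<bar>s - t\<bar>)"
proof (rule neg_def_kernel_cong)
  have ind: "(\<lambda>u. \<bar>indicator {..<s} u - indicator {..<t} u\<bar>)
      = (indicator {min s t..<max s t} :: real \<Rightarrow> real)" for s t :: real
    by (auto simp: indicator_def min_def max_def)
  have int_ind: "integrable lborel (\<lambda>u. \<bar>indicator {..<s} u - indicator {..<t} u\<bar> :: real)" for s t :: real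
    by (simp add: ind integrable_indicator_iff)
  have ind01: "indicator {..<s} u = (0::real) \<or> indicator {..<s} u = (1::real)" for s u :: real
    by (simp add: indicator_def)
  show "neg_def_kernel UNIV
      (\<lambda>s t :: real. \<integral>u. \<bar>indicator {..<s} u - indicator {..<t} u\<bar> \<partial>lborel)"
    by (intro neg_def_kernel_integral neg_def_kernel_abs_diff_01) (rule ind01 int_ind)+
  show "(\<integral>u. \<bar>indicator {..<s} u - indicator {..<t} u\<bar> \<partial>lborel) = \<bar>s - t\<bar>" for s t :: real
    by (simp add: ind)
qed

section \<open>Measures on a metric tree\<close>

lemma is_rooted_treeD:
  assumes "is_rooted_tree V r par len"
  shows "finite V" "r \<in> V"
  using assms unfolding is_rooted_tree_def by auto

lemma space_tree_space: "r \<in> V \<Longrightarrow> space (tree_space V r len) = tree_pts V r len"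
  unfolding tree_space_def tree_pts_def by (auto simp: space_restrict_space space_pair_measure)

lemma space_length_measure: "space (length_measure V r len) = tree_pts V r len"
  unfolding length_measure_def by (simp add: space_measure_of_conv)

lemma sets_length_measure:
  assumes "r \<in> V"
  shows "sets (length_measure V r len) = sets (tree_space V r len)"
  unfolding length_measure_def space_tree_space[OF assms, symmetric]
  by (simp add: sets_measure_of[OF sets.space_closed] sets.sigma_sets_eq)

lemma finite_measure_length_measure:
  assumes "finite V"
  shows "finite_measure (length_measure V r len)"
proof (rule finite_measureI)
  have edge_finite: "emeasure lborel {t \<in> {0<..len v}. (v, t) \<in> tree_pts V r len} < \<infinity>" for v
  proof (rule le_less_trans[OF emeasure_mono[of _ "{0<..len v}"]])
    show "emeasure lborel {0<..len v} < \<infinity>"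
      by (cases "0 \<le> len v") auto
  qed auto
  have "emeasure (length_measure V r len) (space (length_measure V r len))
      \<le> (\<Sum>v\<in>V - {r}. emeasure lborel {t \<in> {0<..len v}. (v, t) \<in> tree_pts V r len})"
    unfolding length_measure_def emeasure_measure_of_conv space_measure_of_conv by auto
  also have "\<dots> < \<infinity>"
    using assms edge_finite by (simp add: top_ennreal_def[symmetric])
  finally show "emeasure (length_measure V r len) (space (length_measure V r len)) \<noteq> \<infinity>"
    by simp
qed

lemma borel_measurable_length_measureI:
  assumes "r \<in> V" "h \<in> borel_measurable (tree_space V r len)"
  shows "h \<in> borel_measurable (length_measure V r len)"
  using assms by (subst measurable_cong_sets[OF sets_length_measure refl]) simp_all

lemma integrable_length_measure_bounded:
  fixes h :: "'v \<times> real \<Rightarrow> real"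
  assumes tree: "is_rooted_tree V r par len"
    and h: "h \<in> borel_measurable (tree_space V r len)"
    and bound: "\<forall>y\<in>tree_pts V r len. \<bar>h y\<bar> \<le> C"
  shows "integrable (length_measure V r len) h"
proof -
  interpret finite_measure "length_measure V r len"
    by (rule finite_measure_length_measure[OF is_rooted_treeD(1)[OF tree]])
  show ?thesis
    using bound borel_measurable_length_measureI[OF is_rooted_treeD(2)[OF tree] h]
    by (intro integrable_const_bound[where B = C]) (auto simp: space_length_measure)
qed

lemma
  assumes "r \<in> V" and "\<mu> \<in> tree_measures V r len"
  shows sets_tree_measure: "sets \<mu> = sets (tree_space V r len)"
    and space_tree_measure: "space \<mu> = tree_pts V r len"
    and finite_measure_tree_measure: "finite_measure \<mu>"
  using assms sets_eq_imp_space_eq[of \<mu> "tree_space V r len"] space_tree_space[OF assms(1)]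
  unfolding tree_measures_def by auto

lemma measurable_fst_tree_space: "fst \<in> measurable (tree_space V r len) (count_space V)"
  unfolding tree_space_def by (rule measurable_restrict_space1) simp

lemma borel_measurable_snd_tree_space: "snd \<in> borel_measurable (tree_space V r len)"
  unfolding tree_space_def by (rule measurable_restrict_space1) simp

lemma sets_Collect_count_space_rel:
  assumes "finite V" "h1 \<in> measurable N (count_space V)" "h2 \<in> measurable N (count_space V)"
  shows "{z \<in> space N. R (h1 z) (h2 z)} \<in> sets N"
proof -
  have pair: "(\<lambda>z. (h1 z, h2 z)) \<in> measurable N (count_space (V \<times> V))"
    using measurable_Pair[OF assms(2,3)] pair_measure_countable[of V V] assms(1)
    by (simp add: countable_finite)
  have "{z \<in> space N. R (h1 z) (h2 z)}
      = (\<lambda>z. (h1 z, h2 z)) -` {p \<in> V \<times> V. R (fst p) (snd p)} \<inter> space N"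
    using measurable_space[OF assms(2)] measurable_space[OF assms(3)] by auto
  also have "\<dots> \<in> sets N"
    using measurable_sets[OF pair, of "{p \<in> V \<times> V. R (fst p) (snd p)}"] by simp
  finally show ?thesis .
qed

definition root_path_rel :: "'v set \<Rightarrow> 'v \<Rightarrow> ('v \<Rightarrow> 'v) \<Rightarrow> ('v \<Rightarrow> real)
    \<Rightarrow> (('v \<times> real) \<times> ('v \<times> real)) set" where
  "root_path_rel V r par len =
     {z \<in> tree_pts V r len \<times> tree_pts V r len. snd z \<in> root_path V r par len (fst z)}"

lemma root_path_subset: "root_path V r par len x \<subseteq> tree_pts V r len"
  unfolding root_path_def tree_pts_def by auto

lemma sets_root_path_rel:
  assumes tree: "is_rooted_tree V r par len"
  shows "root_path_rel V r par len \<in> sets (tree_space V r len \<Otimes>\<^sub>M tree_space V r len)"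
proof -
  let ?M = "tree_space V r len \<Otimes>\<^sub>M tree_space V r len"
  note fin = is_rooted_treeD(1)[OF tree]
  have node1: "(\<lambda>z. fst (fst z)) \<in> measurable ?M (count_space V)"
    and node2: "(\<lambda>z. fst (snd z)) \<in> measurable ?M (count_space V)"
    by (auto intro: measurable_compose[OF _ measurable_fst_tree_space])
  have [measurable]: "(\<lambda>z. snd (fst z)) \<in> borel_measurable ?M" "(\<lambda>z. snd (snd z)) \<in> borel_measurable ?M"
    by (auto intro: measurable_compose[OF _ borel_measurable_snd_tree_space])
  let ?A = "{z \<in> space ?M. fst (snd z) = r} \<inter> {z \<in> space ?M. snd (snd z) = 0}"
  let ?B = "{z \<in> space ?M. fst (snd z) \<in> path_nodes r par (fst (fst z)) \<and> fst (snd z) \<noteq> fst (fst z)}"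
  let ?C = "{z \<in> space ?M. fst (fst z) = fst (snd z) \<and> fst (fst z) \<noteq> r}
      \<inter> {z \<in> space ?M. snd (snd z) \<le> snd (fst z)}"
  have A: "?A \<in> sets ?M"
    using sets_Collect_count_space_rel[OF fin node2 node2, where R = "\<lambda>a _. a = r"] by measurable
  have B: "?B \<in> sets ?M"
    by (rule sets_Collect_count_space_rel[OF fin node1 node2])
  have C: "?C \<in> sets ?M"
    using sets_Collect_count_space_rel[OF fin node1 node2, where R = "\<lambda>a b. a = b \<and> a \<noteq> r"]
    by measurable
  have space: "space ?M = tree_pts V r len \<times> tree_pts V r len"
    by (simp add: space_pair_measure space_tree_space[OF is_rooted_treeD(2)[OF tree]])
  have eq: "root_path_rel V r par len = ?A \<union> ?B \<union> ?C"
    unfolding root_path_rel_def root_path_def space by auto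
  show ?thesis
    unfolding eq by (intro sets.Un A B C)
qed

lemma sets_root_path:
  assumes tree: "is_rooted_tree V r par len" and x: "x \<in> tree_pts V r len"
  shows "root_path V r par len x \<in> sets (tree_space V r len)"
proof -
  have "Pair x -` root_path_rel V r par len = root_path V r par len x"
    using root_path_subset[of V r par len x] x unfolding root_path_rel_def by auto
  then show ?thesis
    using sets_Pair1[OF sets_root_path_rel[OF tree]] by metis
qed

definition subtree_mass :: "'v set \<Rightarrow> 'v \<Rightarrow> ('v \<Rightarrow> 'v) \<Rightarrow> ('v \<Rightarrow> real)
    \<Rightarrow> ('v \<times> real) measure \<Rightarrow> 'v \<times> real \<Rightarrow> real" where
  "subtree_mass V r par len \<mu> y = measure \<mu> {x \<in> tree_pts V r len. y \<in> root_path V r par len x}"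

lemma subtree_mass_eq_integral:
  assumes "r \<in> V" "\<mu> \<in> tree_measures V r len"
  shows "subtree_mass V r par len \<mu> y = (\<integral>x. indicator (root_path_rel V r par len) (x, y) \<partial>\<mu>)"
proof -
  have "(\<lambda>x. indicator (root_path_rel V r par len) (x, y) :: real)
      = indicator {x \<in> tree_pts V r len. y \<in> root_path V r par len x}"
    using root_path_subset[of V r par len] by (auto simp: indicator_def root_path_rel_def fun_eq_iff)
  moreover have "{x \<in> tree_pts V r len. y \<in> root_path V r par len x} \<inter> space \<mu>
      = {x \<in> tree_pts V r len. y \<in> root_path V r par len x}"
    using space_tree_measure[OF assms] by auto
  ultimately show ?thesis
    by (simp add: subtree_mass_def)
qed

lemma borel_measurable_subtree_mass:
  assumes tree: "is_rooted_tree V r par len" and \<mu>: "\<mu> \<in> tree_measures V r len"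
  shows "subtree_mass V r par len \<mu> \<in> borel_measurable (tree_space V r len)"
proof -
  let ?M = "tree_space V r len"
  note rV = is_rooted_treeD(2)[OF tree]
  interpret finite_measure \<mu> by (rule finite_measure_tree_measure[OF rV \<mu>])
  have "sets (\<mu> \<Otimes>\<^sub>M ?M) = sets (?M \<Otimes>\<^sub>M ?M)"
    by (rule sets_pair_measure_cong[OF sets_tree_measure[OF rV \<mu>] refl])
  then have [measurable]: "root_path_rel V r par len \<in> sets (\<mu> \<Otimes>\<^sub>M ?M)"
    using sets_root_path_rel[OF tree] by simp
  have "(\<lambda>(y, x). indicator (root_path_rel V r par len) (x, y) :: real) \<in> borel_measurable (?M \<Otimes>\<^sub>M \<mu>)"
    by measurable
  moreover have "subtree_mass V r par len \<mu>
      = (\<lambda>y. \<integral>x. indicator (root_path_rel V r par len) (x, y) \<partial>\<mu>)"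
    by (rule ext) (rule subtree_mass_eq_integral[OF rV \<mu>])
  ultimately show ?thesis
    using borel_measurable_lebesgue_integral by simp
qed

lemma subtree_mass_le:
  assumes "r \<in> V" "\<mu> \<in> tree_measures V r len"
  shows "subtree_mass V r par len \<mu> y \<le> measure \<mu> (tree_pts V r len)"
  using finite_measure.bounded_measure[OF finite_measure_tree_measure[OF assms]]
  by (simp add: subtree_mass_def space_tree_measure[OF assms])

lemma abs_subtree_mass_diff_le:
  assumes "r \<in> V" "\<mu> \<in> tree_measures V r len" "\<nu> \<in> tree_measures V r len"
  shows "\<bar>subtree_mass V r par len \<mu> y - subtree_mass V r par len \<nu> y\<bar>
    \<le> measure \<mu> (tree_pts V r len) + measure \<nu> (tree_pts V r len)"
proof -
  have "0 \<le> subtree_mass V r par len \<mu> y" "0 \<le> subtree_mass V r par len \<nu> y"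
    by (simp_all add: subtree_mass_def)
  with subtree_mass_le[OF assms(1,2), of par y] subtree_mass_le[OF assms(1,3), of par y] show ?thesis
    unfolding abs_le_iff by (intro conjI; linarith)
qed

lemma integral_root_path_repr:
  assumes tree: "is_rooted_tree V r par len"
    and \<mu>: "\<mu> \<in> tree_measures V r len"
    and g: "g \<in> borel_measurable (tree_space V r len)"
    and g_bound: "\<forall>y\<in>tree_pts V r len. \<bar>g y\<bar> \<le> B"
    and f: "\<forall>x\<in>tree_pts V r len. f x = s + (LINT y:root_path V r par len x|length_measure V r len. g y)"
  shows "(\<integral>x. f x \<partial>\<mu>) = s * measure \<mu> (tree_pts V r len)
           + (\<integral>y. g y * subtree_mass V r par len \<mu> y \<partial>length_measure V r len)"
proof -
  let ?T = "tree_pts V r len" and ?\<omega> = "length_measure V r len"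
  let ?K = "root_path_rel V r par len"
  let ?k = "\<lambda>z. indicator ?K z * g (snd z)"
  note rV = is_rooted_treeD(2)[OF tree]
  interpret \<mu>: finite_measure \<mu> by (rule finite_measure_tree_measure[OF rV \<mu>])
  interpret \<omega>: finite_measure ?\<omega> by (rule finite_measure_length_measure[OF is_rooted_treeD(1)[OF tree]])
  interpret pair_sigma_finite \<mu> ?\<omega> ..
  interpret \<mu>\<omega>: finite_measure "\<mu> \<Otimes>\<^sub>M ?\<omega>"
    by (rule finite_measure_pair_measure) unfold_locales
  have "sets (\<mu> \<Otimes>\<^sub>M ?\<omega>) = sets (tree_space V r len \<Otimes>\<^sub>M tree_space V r len)"
    by (rule sets_pair_measure_cong[OF sets_tree_measure[OF rV \<mu>] sets_length_measure[OF rV]])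
  then have [measurable]: "?K \<in> sets (\<mu> \<Otimes>\<^sub>M ?\<omega>)"
    using sets_root_path_rel[OF tree] by simp
  have [measurable]: "g \<in> borel_measurable ?\<omega>"
    by (rule borel_measurable_length_measureI[OF rV g])
  have k_int: "integrable (\<mu> \<Otimes>\<^sub>M ?\<omega>) ?k"
  proof (rule \<mu>\<omega>.integrable_const_bound[where B = B])
    show "AE z in \<mu> \<Otimes>\<^sub>M ?\<omega>. norm (?k z) \<le> B"
      using g_bound by (intro AE_I2) (auto simp: space_pair_measure space_length_measure indicator_def)
  qed measurable
  have inner: "(LINT y:root_path V r par len x|?\<omega>. g y) = (\<integral>y. ?k (x, y) \<partial>?\<omega>)" if "x \<in> ?T" for x
    unfolding set_lebesgue_integral_def
    by (rule Bochner_Integration.integral_cong) (auto simp: space_length_measure root_path_rel_def that indicator_def)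
  have "(\<integral>x. f x \<partial>\<mu>) = (\<integral>x. s + (\<integral>y. ?k (x, y) \<partial>?\<omega>) \<partial>\<mu>)"
    by (rule Bochner_Integration.integral_cong) (auto simp: space_tree_measure[OF rV \<mu>] f inner)
  also have "\<dots> = s * measure \<mu> ?T + (\<integral>x. (\<integral>y. ?k (x, y) \<partial>?\<omega>) \<partial>\<mu>)"
    using integrable_fst'[OF k_int] by (simp add: space_tree_measure[OF rV \<mu>])
  also have "(\<integral>x. (\<integral>y. ?k (x, y) \<partial>?\<omega>) \<partial>\<mu>) = (\<integral>y. (\<integral>x. ?k (x, y) \<partial>\<mu>) \<partial>?\<omega>)"
    using Fubini_integral[of "\<lambda>x y. ?k (x, y)"] k_int by (simp add: case_prod_beta')
  also have "\<dots> = (\<integral>y. g y * subtree_mass V r par len \<mu> y \<partial>?\<omega>)"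
    by (simp add: subtree_mass_eq_integral[OF rV \<mu>] mult.commute)
  finally show ?thesis .
qed

section \<open>The supremum defining ET_tilde\<close>

definition subtree_mass_dist :: "'v set \<Rightarrow> 'v \<Rightarrow> ('v \<Rightarrow> 'v) \<Rightarrow> ('v \<Rightarrow> real)
    \<Rightarrow> ('v \<times> real) measure \<Rightarrow> ('v \<times> real) measure \<Rightarrow> real" where
  "subtree_mass_dist V r par len \<mu> \<nu> =
     (\<integral>y. \<bar>subtree_mass V r par len \<mu> y - subtree_mass V r par len \<nu> y\<bar> \<partial>length_measure V r len)"

lemma L_alpha_bounded_repr:
  assumes tree: "is_rooted_tree V r par len" and b: "0 \<le> b"
    and f: "f \<in> L_alpha V r par len b lam w1 w2 \<alpha>"
  obtains s g where "- w2 (r, 0) - b * lam / 2 + \<alpha> \<le> s" "s \<le> w1 (r, 0) + b * lam / 2 - \<alpha>"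
    and "g \<in> borel_measurable (tree_space V r len)" "\<forall>y\<in>tree_pts V r len. \<bar>g y\<bar> \<le> b"
    and "\<forall>x\<in>tree_pts V r len.
           f x = s + (LINT y:root_path V r par len x|length_measure V r len. g y)"
proof -
  let ?\<omega> = "length_measure V r len"
  note rV = is_rooted_treeD(2)[OF tree]
  obtain s g where s: "- w2 (r, 0) - b * lam / 2 + \<alpha> \<le> s" "s \<le> w1 (r, 0) + b * lam / 2 - \<alpha>"
    and g: "g \<in> borel_measurable (tree_space V r len)" and g_ae: "AE y in ?\<omega>. \<bar>g y\<bar> \<le> b"
    and f_eq: "\<forall>x\<in>tree_pts V r len. f x = s + (LINT y:root_path V r par len x|?\<omega>. g y)"
    using f unfolding L_alpha_def by blast
  define g' where "g' y = max (- b) (min b (g y))" for y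
  have g': "g' \<in> borel_measurable (tree_space V r len)"
    unfolding g'_def using g by measurable
  have "(LINT y:root_path V r par len x|?\<omega>. g y) = (LINT y:root_path V r par len x|?\<omega>. g' y)"
    if "x \<in> tree_pts V r len" for x
  proof (rule set_lebesgue_integral_cong_AE)
    show "root_path V r par len x \<in> sets ?\<omega>"
      using sets_root_path[OF tree that] sets_length_measure[OF rV] by simp
    show "g \<in> borel_measurable ?\<omega>" "g' \<in> borel_measurable ?\<omega>"
      using g g' by (simp_all add: borel_measurable_length_measureI[OF rV])
    show "AE y \<in> root_path V r par len x in ?\<omega>. g y = g' y"
      using g_ae by eventually_elim (auto simp: g'_def)
  qed
  with f_eq have "\<forall>x\<in>tree_pts V r len. f x = s + (LINT y:root_path V r par len x|?\<omega>. g' y)"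
    by simp
  moreover have "\<forall>y\<in>tree_pts V r len. \<bar>g' y\<bar> \<le> b"
    using b by (auto simp: g'_def)
  ultimately show thesis
    using that s g' by blast
qed

lemma integral_diff_root_path_repr:
  assumes tree: "is_rooted_tree V r par len"
    and \<mu>: "\<mu> \<in> tree_measures V r len" and \<nu>: "\<nu> \<in> tree_measures V r len"
    and g: "g \<in> borel_measurable (tree_space V r len)"
    and g_bound: "\<forall>y\<in>tree_pts V r len. \<bar>g y\<bar> \<le> B"
    and f: "\<forall>x\<in>tree_pts V r len. f x = s + (LINT y:root_path V r par len x|length_measure V r len. g y)"
  shows "(\<integral>x. f x \<partial>\<mu>) - (\<integral>x. f x \<partial>\<nu>)
    = s * (measure \<mu> (tree_pts V r len) - measure \<nu> (tree_pts V r len))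
      + (\<integral>y. g y * (subtree_mass V r par len \<mu> y - subtree_mass V r par len \<nu> y) \<partial>length_measure V r len)"
proof -
  note rV = is_rooted_treeD(2)[OF tree]
  have int: "integrable (length_measure V r len) (\<lambda>y. g y * subtree_mass V r par len \<rho> y)"
    if \<rho>: "\<rho> \<in> tree_measures V r len" for \<rho>
  proof (rule integrable_length_measure_bounded[OF tree, where C = "B * measure \<rho> (tree_pts V r len)"])
    show "(\<lambda>y. g y * subtree_mass V r par len \<rho> y) \<in> borel_measurable (tree_space V r len)"
      using g borel_measurable_subtree_mass[OF tree \<rho>] by measurable
    show "\<forall>y\<in>tree_pts V r len. \<bar>g y * subtree_mass V r par len \<rho> y\<bar> \<le> B * measure \<rho> (tree_pts V r len)"
      using g_bound subtree_mass_le[OF rV \<rho>]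
      by (auto simp: abs_mult subtree_mass_def intro!: mult_mono)
  qed
  show ?thesis
    unfolding integral_root_path_repr[OF tree \<mu> g g_bound f] integral_root_path_repr[OF tree \<nu> g g_bound f]
    using Bochner_Integration.integral_diff[OF int[OF \<mu>] int[OF \<nu>]]
    by (simp add: algebra_simps)
qed

lemma mult_le_max_parts:
  fixes s D A1 A2 :: real
  assumes "- A2 \<le> s" "s \<le> A1"
  shows "s * D \<le> A1 * max D 0 + A2 * max (- D) 0"
proof (cases "0 \<le> D")
  case True
  then show ?thesis using assms(2) by (simp add: mult_right_mono)
next
  case False
  then show ?thesis using mult_right_mono_neg[OF assms(1), of D] by simp
qed

lemma L_alpha_integral_diff_le:
  assumes tree: "is_rooted_tree V r par len" and b: "0 \<le> b"
    and \<mu>: "\<mu> \<in> tree_measures V r len" and \<nu>: "\<nu> \<in> tree_measures V r len"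
    and f: "f \<in> L_alpha V r par len b lam w1 w2 \<alpha>"
  shows "(\<integral>x. f x \<partial>\<mu>) - (\<integral>x. f x \<partial>\<nu>)
    \<le> (w1 (r, 0) + b * lam / 2 - \<alpha>) * max (measure \<mu> (tree_pts V r len) - measure \<nu> (tree_pts V r len)) 0
      + (w2 (r, 0) + b * lam / 2 - \<alpha>) * max (measure \<nu> (tree_pts V r len) - measure \<mu> (tree_pts V r len)) 0
      + b * subtree_mass_dist V r par len \<mu> \<nu>"
proof -
  let ?\<omega> = "length_measure V r len" and ?T = "tree_pts V r len"
  let ?h = "\<lambda>y. subtree_mass V r par len \<mu> y - subtree_mass V r par len \<nu> y"
  note rV = is_rooted_treeD(2)[OF tree]
  obtain s g where s: "- w2 (r, 0) - b * lam / 2 + \<alpha> \<le> s" "s \<le> w1 (r, 0) + b * lam / 2 - \<alpha>"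
    and g: "g \<in> borel_measurable (tree_space V r len)" and g_bound: "\<forall>y\<in>?T. \<bar>g y\<bar> \<le> b"
    and f_eq: "\<forall>x\<in>?T. f x = s + (LINT y:root_path V r par len x|?\<omega>. g y)"
    using L_alpha_bounded_repr[OF tree b f] by blast
  have h: "?h \<in> borel_measurable (tree_space V r len)"
    using borel_measurable_subtree_mass[OF tree \<mu>] borel_measurable_subtree_mass[OF tree \<nu>] by measurable
  note h_bound = abs_subtree_mass_diff_le[OF rV \<mu> \<nu>]
  have "(\<integral>x. f x \<partial>\<mu>) - (\<integral>x. f x \<partial>\<nu>) = s * (measure \<mu> ?T - measure \<nu> ?T) + (\<integral>y. g y * ?h y \<partial>?\<omega>)"
    by (rule integral_diff_root_path_repr[OF tree \<mu> \<nu> g g_bound f_eq])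
  also have "(\<integral>y. g y * ?h y \<partial>?\<omega>) \<le> (\<integral>y. b * \<bar>?h y\<bar> \<partial>?\<omega>)"
  proof (rule integral_mono)
    show "integrable ?\<omega> (\<lambda>y. g y * ?h y)"
      by (rule integrable_length_measure_bounded[OF tree, where C = "b * (measure \<mu> ?T + measure \<nu> ?T)"])
        (use g h in measurable, use g_bound h_bound in \<open>auto simp: abs_mult intro!: mult_mono\<close>)
    show "integrable ?\<omega> (\<lambda>y. b * \<bar>?h y\<bar>)"
      by (rule integrable_length_measure_bounded[OF tree, where C = "b * (measure \<mu> ?T + measure \<nu> ?T)"])
        (use h in measurable, use b h_bound in \<open>auto simp: abs_mult intro!: mult_mono\<close>)
    show "g y * ?h y \<le> b * \<bar>?h y\<bar>" if "y \<in> space ?\<omega>" for y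
    proof -
      have "\<bar>g y\<bar> \<le> b" using g_bound that by (simp add: space_length_measure)
      then have "\<bar>g y * ?h y\<bar> \<le> b * \<bar>?h y\<bar>" by (simp add: abs_mult mult_right_mono)
      then show ?thesis by simp
    qed
  qed
  also have "s * (measure \<mu> ?T - measure \<nu> ?T)
      \<le> (w1 (r, 0) + b * lam / 2 - \<alpha>) * max (measure \<mu> ?T - measure \<nu> ?T) 0
        + (w2 (r, 0) + b * lam / 2 - \<alpha>) * max (- (measure \<mu> ?T - measure \<nu> ?T)) 0"
    by (rule mult_le_max_parts) (use s in auto)
  finally show ?thesis
    by (simp add: subtree_mass_dist_def)
qed

lemma L_alpha_integral_diff_attained:
  assumes tree: "is_rooted_tree V r par len" and b: "0 \<le> b"
    and \<mu>: "\<mu> \<in> tree_measures V r len" and \<nu>: "\<nu> \<in> tree_measures V r len"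
    and \<alpha>: "\<alpha> \<le> (b * lam + w1 (r, 0) + w2 (r, 0)) / 2"
  shows "\<exists>f\<in>L_alpha V r par len b lam w1 w2 \<alpha>. (\<integral>x. f x \<partial>\<mu>) - (\<integral>x. f x \<partial>\<nu>)
    = (w1 (r, 0) + b * lam / 2 - \<alpha>) * max (measure \<mu> (tree_pts V r len) - measure \<nu> (tree_pts V r len)) 0
      + (w2 (r, 0) + b * lam / 2 - \<alpha>) * max (measure \<nu> (tree_pts V r len) - measure \<mu> (tree_pts V r len)) 0
      + b * subtree_mass_dist V r par len \<mu> \<nu>"
proof -
  let ?\<omega> = "length_measure V r len" and ?T = "tree_pts V r len"
  let ?h = "\<lambda>y. subtree_mass V r par len \<mu> y - subtree_mass V r par len \<nu> y"
  define D where "D = measure \<mu> ?T - measure \<nu> ?T"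
  define s where "s = (if 0 \<le> D then w1 (r, 0) + b * lam / 2 - \<alpha> else - w2 (r, 0) - b * lam / 2 + \<alpha>)"
  define g where "g y = b * sgn (?h y)" for y
  define f where "f x = s + (LINT y:root_path V r par len x|?\<omega>. g y)" for x
  have g: "g \<in> borel_measurable (tree_space V r len)"
    unfolding g_def using borel_measurable_subtree_mass[OF tree \<mu>] borel_measurable_subtree_mass[OF tree \<nu>]
    by measurable
  have g_bound: "\<forall>y\<in>?T. \<bar>g y\<bar> \<le> b"
    using b by (auto simp: g_def abs_mult abs_sgn_eq)
  have f_L: "f \<in> L_alpha V r par len b lam w1 w2 \<alpha>"
    unfolding L_alpha_def
  proof (intro CollectI exI conjI)
    show "- w2 (r, 0) - b * lam / 2 + \<alpha> \<le> s" "s \<le> w1 (r, 0) + b * lam / 2 - \<alpha>"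
      using \<alpha> by (auto simp: s_def)
    show "AE y in ?\<omega>. \<bar>g y\<bar> \<le> b"
      using g_bound by (intro AE_I2) (simp add: space_length_measure)
  qed (use g f_def in auto)
  have "(\<integral>x. f x \<partial>\<mu>) - (\<integral>x. f x \<partial>\<nu>) = s * D + (\<integral>y. g y * ?h y \<partial>?\<omega>)"
    unfolding D_def by (rule integral_diff_root_path_repr[OF tree \<mu> \<nu> g g_bound]) (simp add: f_def)
  also have "(\<lambda>y. g y * ?h y) = (\<lambda>y. b * \<bar>?h y\<bar>)"
    by (auto simp: g_def sgn_if)
  also have "s * D = (w1 (r, 0) + b * lam / 2 - \<alpha>) * max D 0 + (w2 (r, 0) + b * lam / 2 - \<alpha>) * max (- D) 0"
    by (simp add: s_def algebra_simps)
  finally show ?thesis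
    using f_L by (intro bexI[of _ f]) (simp_all add: D_def subtree_mass_dist_def)
qed

lemma ET_tilde_eq:
  assumes tree: "is_rooted_tree V r par len" and b: "0 \<le> b"
    and \<mu>: "\<mu> \<in> tree_measures V r len" and \<nu>: "\<nu> \<in> tree_measures V r len"
    and \<alpha>: "\<alpha> \<le> (b * lam + w1 (r, 0) + w2 (r, 0)) / 2"
  shows "ET_tilde V r par len b lam w1 w2 \<alpha> \<mu> \<nu>
    = (w1 (r, 0) + b * lam / 2 - \<alpha>) * max (measure \<mu> (tree_pts V r len) - measure \<nu> (tree_pts V r len)) 0
      + (w2 (r, 0) + b * lam / 2 - \<alpha>) * max (measure \<nu> (tree_pts V r len) - measure \<mu> (tree_pts V r len)) 0
      + b * subtree_mass_dist V r par len \<mu> \<nu>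
      - b * lam / 2 * (measure \<mu> (tree_pts V r len) + measure \<nu> (tree_pts V r len))"
    (is "_ = ?\<Phi> - _")
proof -
  let ?L = "L_alpha V r par len b lam w1 w2 \<alpha>"
  let ?I = "\<lambda>f. (\<integral>x. f x \<partial>\<mu>) - (\<integral>x. f x \<partial>\<nu>)"
  have "\<exists>f\<in>?L. ?I f = ?\<Phi>"
    by (rule L_alpha_integral_diff_attained[OF tree b \<mu> \<nu>]) (rule \<alpha>)
  then obtain f where f: "f \<in> ?L" "?I f = ?\<Phi>"
    by blast
  have "(SUP f\<in>?L. ?I f) = ?\<Phi>"
  proof (rule cSup_eq_maximum)
    show "?\<Phi> \<in> ?I ` ?L"
      using f by (intro image_eqI[where x = f]) simp_all
    fix y assume "y \<in> ?I ` ?L"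
    then obtain f' where "f' \<in> ?L" "y = ?I f'" by blast
    then show "y \<le> ?\<Phi>"
      by (simp only:) (rule L_alpha_integral_diff_le[OF tree b \<mu> \<nu>])
  qed
  then show ?thesis
    unfolding ET_tilde_def by simp
qed

lemma neg_def_kernel_subtree_mass_dist:
  assumes tree: "is_rooted_tree V r par len"
  shows "neg_def_kernel (tree_measures V r len) (subtree_mass_dist V r par len)"
  unfolding subtree_mass_dist_def
proof (rule neg_def_kernel_integral)
  show "neg_def_kernel (tree_measures V r len)
      (\<lambda>\<mu> \<nu>. \<bar>subtree_mass V r par len \<mu> y - subtree_mass V r par len \<nu> y\<bar>)" for y
    by (rule neg_def_kernel_compose[OF neg_def_kernel_abs_diff]) simp
  fix \<mu> \<nu> assume \<mu>: "\<mu> \<in> tree_measures V r len" and \<nu>: "\<nu> \<in> tree_measures V r len"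
  show "integrable (length_measure V r len)
      (\<lambda>y. \<bar>subtree_mass V r par len \<mu> y - subtree_mass V r par len \<nu> y\<bar>)"
    using borel_measurable_subtree_mass[OF tree \<mu>] borel_measurable_subtree_mass[OF tree \<nu>]
      abs_subtree_mass_diff_le[OF is_rooted_treeD(2)[OF tree] \<mu> \<nu>]
    by (intro integrable_length_measure_bounded[OF tree]) auto
qed

lemma neg_def_kernel_ET_tilde:
  assumes tree: "is_rooted_tree V r par len" and b: "0 \<le> b"
    and \<alpha>: "\<alpha> \<le> (b * lam + w1 (r, 0) + w2 (r, 0)) / 2"
  shows "neg_def_kernel (tree_measures V r len) (ET_tilde V r par len b lam w1 w2 \<alpha>)"
proof -
  let ?m = "\<lambda>\<mu>. measure \<mu> (tree_pts V r len)"
  define A1 where "A1 = w1 (r, 0) + b * lam / 2 - \<alpha>"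
  define A2 where "A2 = w2 (r, 0) + b * lam / 2 - \<alpha>"
  have "0 \<le> (A1 + A2) / 2"
    using \<alpha> by (simp add: A1_def A2_def)
  then have "neg_def_kernel (tree_measures V r len) (\<lambda>\<mu> \<nu>.
      (A1 + A2) / 2 * \<bar>?m \<mu> - ?m \<nu>\<bar> + b * subtree_mass_dist V r par len \<mu> \<nu>
      + (((A1 - A2) / 2 - b * lam / 2) * ?m \<mu> + (- (A1 - A2) / 2 - b * lam / 2) * ?m \<nu>))"
    using b by (intro neg_def_kernel_add neg_def_kernel_mult neg_def_kernel_separable
        neg_def_kernel_compose[OF neg_def_kernel_abs_diff] neg_def_kernel_subtree_mass_dist[OF tree]) auto
  then show ?thesis
  proof (rule neg_def_kernel_cong)
    fix \<mu> \<nu> assume \<mu>: "\<mu> \<in> tree_measures V r len" and \<nu>: "\<nu> \<in> tree_measures V r len"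
    have ET_eq: "ET_tilde V r par len b lam w1 w2 \<alpha> \<mu> \<nu>
      = A1 * max (?m \<mu> - ?m \<nu>) 0 + A2 * max (?m \<nu> - ?m \<mu>) 0 + b * subtree_mass_dist V r par len \<mu> \<nu>
        - b * lam / 2 * (?m \<mu> + ?m \<nu>)"
      unfolding A1_def A2_def by (rule ET_tilde_eq[OF tree b \<mu> \<nu>]) (rule \<alpha>)
    show "(A1 + A2) / 2 * \<bar>?m \<mu> - ?m \<nu>\<bar> + b * subtree_mass_dist V r par len \<mu> \<nu>
        + (((A1 - A2) / 2 - b * lam / 2) * ?m \<mu> + (- (A1 - A2) / 2 - b * lam / 2) * ?m \<nu>)
      = ET_tilde V r par len b lam w1 w2 \<alpha> \<mu> \<nu>"
      unfolding ET_eq by (cases "?m \<nu> \<le> ?m \<mu>") (simp_all add: max_def abs_if field_simps)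
  qed
qed

theorem proposition3p11:
  fixes V :: "'v set" and r :: 'v and par :: "'v \<Rightarrow> 'v" and len :: "'v \<Rightarrow> real"
    and b lam :: real and w1 w2 :: "'v \<times> real \<Rightarrow> real"
  assumes tree: "is_rooted_tree V r par len"
    and b: "0 \<le> b"
    and w1: "\<forall>x\<in>tree_pts V r len. 0 \<le> w1 x"
    and w2: "\<forall>x\<in>tree_pts V r len. 0 \<le> w2 x"
    and lam: "0 \<le> lam"
  shows "(\<forall>\<alpha>. 0 \<le> \<alpha> \<and> \<alpha> \<le> (b * lam + w1 (r, 0) + w2 (r, 0)) / 2 \<longrightarrow>
            neg_def_kernel (tree_measures V r len) (ET_tilde V r par len b lam w1 w2 \<alpha>))
       \<and> (\<forall>\<alpha>. 0 \<le> \<alpha> \<and> \<alpha> < b * lam / 2 + min (w1 (r, 0)) (w2 (r, 0)) \<longrightarrow>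
            neg_def_kernel (tree_measures V r len)
              (\<lambda>\<mu> \<nu>. ET_tilde V r par len b lam w1 w2 \<alpha> \<mu> \<nu>
                 + b * lam / 2 * (measure \<mu> (tree_pts V r len) + measure \<nu> (tree_pts V r len))))"
proof (intro conjI allI impI)
  fix \<alpha> :: real
  assume "0 \<le> \<alpha> \<and> \<alpha> \<le> (b * lam + w1 (r, 0) + w2 (r, 0)) / 2"
  then show "neg_def_kernel (tree_measures V r len) (ET_tilde V r par len b lam w1 w2 \<alpha>)"
    by (intro neg_def_kernel_ET_tilde[OF tree b]) simp
next
  fix \<alpha> :: real
  assume "0 \<le> \<alpha> \<and> \<alpha> < b * lam / 2 + min (w1 (r, 0)) (w2 (r, 0))"
  then have \<alpha>: "\<alpha> \<le> (b * lam + w1 (r, 0) + w2 (r, 0)) / 2"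
    by (simp add: min_def split: if_splits)
  have "neg_def_kernel (tree_measures V r len) (\<lambda>\<mu> \<nu>. ET_tilde V r par len b lam w1 w2 \<alpha> \<mu> \<nu>
      + (b * lam / 2 * measure \<mu> (tree_pts V r len) + b * lam / 2 * measure \<nu> (tree_pts V r len)))"
    by (rule neg_def_kernel_add[OF neg_def_kernel_ET_tilde[OF tree b] neg_def_kernel_separable]) (rule \<alpha>)
  then show "neg_def_kernel (tree_measures V r len) (\<lambda>\<mu> \<nu>. ET_tilde V r par len b lam w1 w2 \<alpha> \<mu> \<nu>
      + b * lam / 2 * (measure \<mu> (tree_pts V r len) + measure \<nu> (tree_pts V r len)))"
    by (rule neg_def_kernel_cong) (simp add: distrib_left)
qed

end
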